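(* Let $(X,f)$ be a dynamical system with a full background measure $\mu_0$, and assume $(X,f)$ satisfies TRAC 1 and TRAC 2 (with ergodic measures $\mu_1,\dots,\mu_k$). If $B$ is a visible basic set, then there exists $i$ with $|\mu_i|\subset B$; in fact $\bigcup\{Gen(\mu_i):|\mu_i|\subset B\}$ intersects the basin $G(B)$ in a dense subset of $G(B)$. In particular, if $B$ is a terminal basic set then there exists $i$ with $|\mu_i|\subset B$.
   Context: $X$ compact metric, $f$ continuous. A background measure $\mu_0$ is a complete Borel probability measure which is full, i.e. every nonempty open set has positive measure. Basic sets are the chain components of $f$ (equivalence classes of chain recurrent points under mutual reachability by $\epsilon$-chains for all $\epsilon>0$); $B$ is terminal if every point chain-reachable from a point of $B$ lies in $B$. The basin of $B$ is $G(B)=\operatorname{int}\{x:\omega f(x)\subset B\}$, where $\omega f(x)$ is the limit set of the forward orbit; $B$ is visible if $G(B)\neq\emptyset$. $Gen(\mu)$ is the set of points $x$ with $\frac1n\sum_{i<n}u(f^ix)\to\int u\,d\mu$ for all continuous $u$; $|\mu|$ is the support. TRAC 1: there are only finitely many basic sets. TRAC 2: there are finitely many ergodic invariant probability measures $\mu_1,\dots,\mu_k$ such that every point outside some $\mu_0$-null set is generic for some $\mu_i$. *)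

theory Defs
  imports "HOL-Probability.Probability"
begin

definition eps_chain :: "('a::metric_space \<Rightarrow> 'a) \<Rightarrow> 'a set \<Rightarrow> real \<Rightarrow> 'a \<Rightarrow> 'a \<Rightarrow> bool" where
  "eps_chain f X e x y \<longleftrightarrow>
     (\<exists>n::nat. n \<ge> 1 \<and> (\<exists>p::nat \<Rightarrow> 'a. p 0 = x \<and> p n = y \<and> (\<forall>i\<le>n. p i \<in> X) \<and>
        (\<forall>i<n. dist (f (p i)) (p (Suc i)) < e)))"

definition chain_reach :: "('a::metric_space \<Rightarrow> 'a) \<Rightarrow> 'a set \<Rightarrow> 'a \<Rightarrow> 'a \<Rightarrow> bool" where
  "chain_reach f X x y \<longleftrightarrow> (\<forall>e>0. eps_chain f X e x y)"

definition chain_recurrent :: "('a::metric_space \<Rightarrow> 'a) \<Rightarrow> 'a set \<Rightarrow> 'a set" where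
  "chain_recurrent f X = {x \<in> X. chain_reach f X x x}"

definition basic_sets :: "('a::metric_space \<Rightarrow> 'a) \<Rightarrow> 'a set \<Rightarrow> 'a set set" where
  "basic_sets f X = {{y \<in> chain_recurrent f X. chain_reach f X x y \<and> chain_reach f X y x} | x. x \<in> chain_recurrent f X}"

definition terminal :: "('a::metric_space \<Rightarrow> 'a) \<Rightarrow> 'a set \<Rightarrow> 'a set \<Rightarrow> bool" where
  "terminal f X B \<longleftrightarrow> (\<forall>x\<in>B. \<forall>y. chain_reach f X x y \<longrightarrow> y \<in> B)"

definition omega_limit :: "('a::metric_space \<Rightarrow> 'a) \<Rightarrow> 'a \<Rightarrow> 'a set" where
  "omega_limit f x = {y. \<forall>e>0. \<forall>N. \<exists>n\<ge>N. dist ((f ^^ n) x) y < e}"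

definition basin :: "('a::metric_space \<Rightarrow> 'a) \<Rightarrow> 'a set \<Rightarrow> 'a set \<Rightarrow> 'a set" where
  "basin f X B = (top_of_set X) interior_of {x \<in> X. omega_limit f x \<subseteq> B}"

definition visible :: "('a::metric_space \<Rightarrow> 'a) \<Rightarrow> 'a set \<Rightarrow> 'a set \<Rightarrow> bool" where
  "visible f X B \<longleftrightarrow> basin f X B \<noteq> {}"

definition Gen :: "('a::metric_space \<Rightarrow> 'a) \<Rightarrow> 'a set \<Rightarrow> 'a measure \<Rightarrow> 'a set" where
  "Gen f X \<mu> = {x \<in> X. \<forall>u::'a \<Rightarrow> real. continuous_on X u \<longrightarrow>
      (\<lambda>n. (\<Sum>i<n. u ((f ^^ i) x)) / real n) \<longlonglongrightarrow> integral\<^sup>L \<mu> u}"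

definition supp :: "'a set \<Rightarrow> 'a::metric_space measure \<Rightarrow> 'a set" where
  "supp X \<mu> = {x \<in> X. \<forall>e>0. emeasure \<mu> (ball x e \<inter> X) > 0}"

definition borel_prob_on :: "'a::metric_space set \<Rightarrow> 'a measure \<Rightarrow> bool" where
  "borel_prob_on X \<mu> \<longleftrightarrow> prob_space \<mu> \<and> space \<mu> = X \<and> sets \<mu> = sets (restrict_space borel X)"

definition invariant_measure :: "('a::metric_space \<Rightarrow> 'a) \<Rightarrow> 'a set \<Rightarrow> 'a measure \<Rightarrow> bool" where
  "invariant_measure f X \<mu> \<longleftrightarrow> borel_prob_on X \<mu> \<and>
     (\<forall>A\<in>sets \<mu>. emeasure \<mu> (f -` A \<inter> X) = emeasure \<mu> A)"

definition ergodic_measure :: "('a::metric_space \<Rightarrow> 'a) \<Rightarrow> 'a set \<Rightarrow> 'a measure \<Rightarrow> bool" where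
  "ergodic_measure f X \<mu> \<longleftrightarrow> invariant_measure f X \<mu> \<and>
     (\<forall>A\<in>sets \<mu>. f -` A \<inter> X = A \<longrightarrow> emeasure \<mu> A = 0 \<or> emeasure \<mu> A = 1)"

definition full_background :: "'a::metric_space set \<Rightarrow> 'a measure \<Rightarrow> bool" where
  "full_background X \<mu>0 \<longleftrightarrow> (\<exists>\<nu>. borel_prob_on X \<nu> \<and> \<mu>0 = completion \<nu>) \<and>
     (\<forall>U. openin (top_of_set X) U \<and> U \<noteq> {} \<longrightarrow> emeasure \<mu>0 U > 0)"

definition TRAC1 :: "('a::metric_space \<Rightarrow> 'a) \<Rightarrow> 'a set \<Rightarrow> bool" where
  "TRAC1 f X \<longleftrightarrow> finite (basic_sets f X)"

definition TRAC2_with :: "('a::metric_space \<Rightarrow> 'a) \<Rightarrow> 'a set \<Rightarrow> 'a measure \<Rightarrow> nat \<Rightarrow> (nat \<Rightarrow> 'a measure) \<Rightarrow> bool" where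
  "TRAC2_with f X \<mu>0 k \<mu> \<longleftrightarrow> (\<forall>i\<in>{1..k}. ergodic_measure f X (\<mu> i)) \<and>
     (\<exists>N\<in>null_sets \<mu>0. \<forall>x\<in>X - N. \<exists>i\<in>{1..k}. x \<in> Gen f X (\<mu> i))"

end

theory Submission
  imports Defs
begin

text \<open>
  A generic point x of a probability measure \<mu> sees every point of the support of \<mu> infinitely
  often: otherwise the time averages of a bump function around that point would tend to 0,
  while its integral is positive. Hence supp \<mu> \<subseteq> \<omega>(x). Since the background measure is full
  and almost every point is generic for some \<mu> i, generic points are dense in the open basin G(B),
  and for such points supp (\<mu> i) \<subseteq> \<omega>(x) \<subseteq> B.

  For a terminal basic set B with a point b, finiteness of the set of basic sets yields one
  \<epsilon> > 0 such that no other basic set is \<epsilon>-chain reachable from b. The set of points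
  \<epsilon>/2-chain reachable from b is then open, nonempty and forward invariant, and \<omega>-limit
  points of its points are chain recurrent and \<epsilon>-chain reachable from b, hence lie in B.
  So this set lies in the basin, B is visible, and the first part applies.
\<close>

lemma eps_chain_pos:
  assumes "eps_chain f X e x y"
  shows "e > 0"
proof -
  obtain n p where "n \<ge> 1" "\<forall>i<n. dist (f (p i)) (p (Suc i)) < e"
    using assms unfolding eps_chain_def by blast
  then have "dist (f (p 0)) (p 1) < e" by simp
  moreover have "dist (f (p 0)) (p 1) \<ge> 0" by simp
  ultimately show ?thesis by linarith
qed

lemma eps_chain_endpoints: "eps_chain f X e x y \<Longrightarrow> x \<in> X \<and> y \<in> X"
  unfolding eps_chain_def by (metis le_refl zero_le)

lemma eps_chain_mono:
  assumes "eps_chain f X e x y" "e \<le> e'"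
  shows "eps_chain f X e' x y"
proof -
  obtain n p where n: "n \<ge> 1" "p 0 = x" "p n = y" "\<forall>i\<le>n. p i \<in> X"
    "\<forall>i<n. dist (f (p i)) (p (Suc i)) < e"
    using assms(1) unfolding eps_chain_def by blast
  have "dist (f (p i)) (p (Suc i)) < e'" if "i < n" for i
    using n(5) that assms(2) by force
  then show ?thesis unfolding eps_chain_def using n by blast
qed

lemma eps_chain_trans:
  assumes "eps_chain f X e x y" "eps_chain f X e y z"
  shows "eps_chain f X e x z"
proof -
  obtain n p where n: "n \<ge> 1" "p 0 = x" "p n = y" "\<forall>i\<le>n. p i \<in> X"
    "\<forall>i<n. dist (f (p i)) (p (Suc i)) < e"
    using assms(1) unfolding eps_chain_def by blast
  obtain m q where m: "m \<ge> 1" "q 0 = y" "q m = z" "\<forall>i\<le>m. q i \<in> X"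
    "\<forall>i<m. dist (f (q i)) (q (Suc i)) < e"
    using assms(2) unfolding eps_chain_def by blast
  define r where "r i = (if i \<le> n then p i else q (i - n))" for i
  have "dist (f (r i)) (r (Suc i)) < e" if "i < n + m" for i
  proof (cases "i < n")
    case True
    then show ?thesis using n by (simp add: r_def)
  next
    case False
    have "r i = q (i - n)"
      using False n(3) m(2) by (cases "i = n") (simp_all add: r_def)
    moreover have "r (Suc i) = q (Suc (i - n))"
      using False by (simp add: r_def Suc_diff_le)
    moreover have "i - n < m" using that False by simp
    ultimately show ?thesis using m(5) by simp
  qed
  moreover have "r 0 = x" "r (n + m) = z" "\<forall>i\<le>n + m. r i \<in> X"
    using n m by (auto simp: r_def)
  ultimately show ?thesis
    unfolding eps_chain_def using n(1) by (intro exI[of _ "n + m"] exI[of _ r]) auto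
qed

lemma eps_chain_step: "x \<in> X \<Longrightarrow> f x \<in> X \<Longrightarrow> e > 0 \<Longrightarrow> eps_chain f X e x (f x)"
  unfolding eps_chain_def
  by (intro exI[of _ 1] conjI exI[of _ "\<lambda>i. if i = 0 then x else f x"]) auto

lemma funpow_mem: "x \<in> X \<Longrightarrow> f ` X \<subseteq> X \<Longrightarrow> (f ^^ n) x \<in> X"
  by (induction n) auto

lemma eps_chain_orbit:
  assumes "x \<in> X" "f ` X \<subseteq> X" "e > 0" "n < m"
  shows "eps_chain f X e ((f ^^ n) x) ((f ^^ m) x)"
  using assms(4)
proof (induction m)
  case (Suc m)
  have step: "eps_chain f X e ((f ^^ m) x) ((f ^^ Suc m) x)"
    using eps_chain_step funpow_mem[OF assms(1,2)] assms(2,3) by fastforce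
  show ?case
  proof (cases "n = m")
    case False
    then have "n < m" using Suc.prems by simp
    then show ?thesis using Suc.IH step eps_chain_trans by blast
  qed (use step in simp)
qed simp

lemma eps_chain_along_orbit:
  assumes "eps_chain f X e b x" "f ` X \<subseteq> X"
  shows "eps_chain f X e b ((f ^^ n) x)"
proof (cases "n = 0")
  case False
  have "x \<in> X" "e > 0" using assms(1) eps_chain_endpoints eps_chain_pos by blast+
  then have "eps_chain f X e x ((f ^^ n) x)"
    using eps_chain_orbit[of x X f e 0 n] assms(2) False by simp
  then show ?thesis using assms(1) eps_chain_trans by blast
qed (use assms in simp)

lemma eps_chain_perturb_start:
  assumes "eps_chain f X e a b" "a' \<in> X" "dist (f a') (f a) < d"
  shows "eps_chain f X (e + d) a' b"
proof -
  obtain n p where n: "n \<ge> 1" "p 0 = a" "p n = b" "\<forall>i\<le>n. p i \<in> X"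
    "\<forall>i<n. dist (f (p i)) (p (Suc i)) < e"
    using assms(1) unfolding eps_chain_def by blast
  have d: "d > 0" using assms(3) by (meson le_less_trans zero_le_dist)
  define r where "r = p(0 := a')"
  have "dist (f (r i)) (r (Suc i)) < e + d" if "i < n" for i
  proof (cases "i = 0")
    case True
    have "dist (f a') (p 1) \<le> dist (f a') (f a) + dist (f a) (p 1)" by (rule dist_triangle)
    moreover have "dist (f a) (p 1) < e" using n that True by auto
    ultimately show ?thesis using True assms(3) by (simp add: r_def)
  next
    case False
    have "dist (f (p i)) (p (Suc i)) < e" using n(5) that by blast
    then show ?thesis using False d by (simp add: r_def)
  qed
  moreover have "r 0 = a'" "r n = b" "\<forall>i\<le>n. r i \<in> X" using n assms(2) by (auto simp: r_def)
  ultimately show ?thesis unfolding eps_chain_def using n(1) by blast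
qed

lemma eps_chain_last_step:
  assumes "eps_chain f X e x y"
  shows "\<exists>z. dist (f z) y < e \<and>
    (\<forall>e' y'. e \<le> e' \<longrightarrow> y' \<in> X \<longrightarrow> dist (f z) y' < e' \<longrightarrow> eps_chain f X e' x y')"
proof -
  obtain n p where n: "n \<ge> 1" "p 0 = x" "p n = y" "\<forall>i\<le>n. p i \<in> X"
    "\<forall>i<n. dist (f (p i)) (p (Suc i)) < e"
    using assms unfolding eps_chain_def by blast
  have last: "Suc (n - 1) = n" using n(1) by simp
  have "n - 1 < n" using n(1) by simp
  then have "dist (f (p (n - 1))) (p (Suc (n - 1))) < e" using n(5) by blast
  then have "dist (f (p (n - 1))) y < e" using last n(3) by simp
  moreover have "eps_chain f X e' x y'"
    if "e \<le> e'" "y' \<in> X" "dist (f (p (n - 1))) y' < e'" for e' y'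
  proof -
    define r where "r = p(n := y')"
    have "dist (f (r i)) (r (Suc i)) < e'" if "i < n" for i
    proof (cases "Suc i = n")
      case True
      then have "i = n - 1" by simp
      then show ?thesis using True \<open>dist (f (p (n - 1))) y' < e'\<close> that by (simp add: r_def)
    next
      case False
      then show ?thesis using n that \<open>e \<le> e'\<close> by (simp add: r_def) (meson less_le_trans)
    qed
    moreover have "r 0 = x" "r n = y'" "\<forall>i\<le>n. r i \<in> X" using n that by (auto simp: r_def)
    ultimately show ?thesis unfolding eps_chain_def using n(1) by blast
  qed
  ultimately show ?thesis by blast
qed

lemma eps_chain_perturb_end:
  assumes "eps_chain f X e x y" "y' \<in> X" "dist y y' < d"
  shows "eps_chain f X (e + d) x y'"
proof -
  obtain z where z: "dist (f z) y < e"
    "\<forall>e' y'. e \<le> e' \<longrightarrow> y' \<in> X \<longrightarrow> dist (f z) y' < e' \<longrightarrow> eps_chain f X e' x y'"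
    using eps_chain_last_step[OF assms(1)] by blast
  have "dist (f z) y' \<le> dist (f z) y + dist y y'" by (rule dist_triangle)
  then have "dist (f z) y' < e + d" using z(1) assms(3) by linarith
  moreover have "e \<le> e + d" using assms(3) zero_le_dist[of y y'] by linarith
  ultimately show ?thesis using z(2) assms(2) by blast
qed

lemma eps_chain_reachable_openin: "openin (top_of_set X) {y. eps_chain f X e x y}"
  unfolding openin_euclidean_subtopology_iff
proof (intro conjI ballI)
  show "{y. eps_chain f X e x y} \<subseteq> X" using eps_chain_endpoints by blast
next
  fix y assume "y \<in> {y. eps_chain f X e x y}"
  then obtain z where z: "dist (f z) y < e"
    "\<forall>e' y'. e \<le> e' \<longrightarrow> y' \<in> X \<longrightarrow> dist (f z) y' < e' \<longrightarrow> eps_chain f X e' x y'"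
    using eps_chain_last_step by blast
  have "y' \<in> {y. eps_chain f X e x y}" if "y' \<in> X" "dist y' y < e - dist (f z) y" for y'
  proof -
    have "dist (f z) y' \<le> dist (f z) y + dist y' y" by (metis dist_triangle dist_commute)
    then show ?thesis using z(2) that by fastforce
  qed
  then show "\<exists>d>0. \<forall>y'\<in>X. dist y' y < d \<longrightarrow> y' \<in> {y. eps_chain f X e x y}"
    using z(1) by (intro exI[of _ "e - dist (f z) y"]) auto
qed

lemma chain_reach_trans: "chain_reach f X x y \<Longrightarrow> chain_reach f X y z \<Longrightarrow> chain_reach f X x z"
  unfolding chain_reach_def using eps_chain_trans by blast

lemma omega_limit_subset:
  assumes "closed X" "x \<in> X" "f ` X \<subseteq> X"
  shows "omega_limit f x \<subseteq> X"
proof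
  fix y assume y: "y \<in> omega_limit f x"
  have "\<exists>z\<in>X. dist z y < e" if e: "e > 0" for e
  proof -
    obtain n where "dist ((f ^^ n) x) y < e" using y e unfolding omega_limit_def by blast
    then show ?thesis using funpow_mem[OF assms(2,3)] by blast
  qed
  then show "y \<in> X" using closed_approachable[OF assms(1)] by blast
qed

lemma eps_chain_to_omega_limit:
  assumes "closed X" "f ` X \<subseteq> X" "eps_chain f X e b x" "y \<in> omega_limit f x" "d > 0"
  shows "eps_chain f X (e + d) b y"
proof -
  obtain n where n: "dist ((f ^^ n) x) y < d" using assms(4,5) unfolding omega_limit_def by blast
  have "x \<in> X" using eps_chain_endpoints[OF assms(3)] by blast
  then have "y \<in> X" using omega_limit_subset[OF assms(1) _ assms(2)] assms(4) by blast
  then show ?thesis using eps_chain_perturb_end[OF eps_chain_along_orbit[OF assms(3,2)] _ n] by blast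
qed

lemma chain_reach_omega_limit:
  assumes "closed X" "continuous_on X f" "f ` X \<subseteq> X" "x \<in> X" "y \<in> omega_limit f x"
  shows "chain_reach f X y y"
  unfolding chain_reach_def
proof (intro allI impI)
  have y: "y \<in> X" using omega_limit_subset assms by blast
  fix \<epsilon> :: real assume "\<epsilon> > 0"
  define e where "e = \<epsilon> / 3"
  have e: "e > 0" using \<open>\<epsilon> > 0\<close> by (simp add: e_def)
  obtain d where d: "d > 0" "\<forall>x'\<in>X. dist x' y < d \<longrightarrow> dist (f x') (f y) < e"
    using assms(2) y e unfolding continuous_on_iff by blast
  obtain n where n: "dist ((f ^^ n) x) y < d" using assms(5) d(1) unfolding omega_limit_def by blast
  obtain m where m: "m \<ge> Suc n" "dist ((f ^^ m) x) y < e"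
    using assms(5) e unfolding omega_limit_def by blast
  have "eps_chain f X e ((f ^^ n) x) ((f ^^ m) x)"
    using eps_chain_orbit[OF assms(4,3) e] m(1) by simp
  moreover have "dist (f y) (f ((f ^^ n) x)) < e"
    using d(2) n funpow_mem[OF assms(4,3)] by (metis dist_commute)
  ultimately have "eps_chain f X (e + e) y ((f ^^ m) x)"
    using eps_chain_perturb_start y by blast
  then have "eps_chain f X (e + e + e) y y" using eps_chain_perturb_end y m(2) by blast
  then show "eps_chain f X \<epsilon> y y" by (simp add: e_def)
qed

lemma omega_limit_subset_chain_recurrent:
  assumes "closed X" "continuous_on X f" "f ` X \<subseteq> X" "x \<in> X"
  shows "omega_limit f x \<subseteq> chain_recurrent f X"
  using chain_reach_omega_limit[OF assms] omega_limit_subset[OF assms(1,4,3)]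
  unfolding chain_recurrent_def by blast

definition chain_class :: "('a::metric_space \<Rightarrow> 'a) \<Rightarrow> 'a set \<Rightarrow> 'a \<Rightarrow> 'a set" where
  "chain_class f X x = {y \<in> chain_recurrent f X. chain_reach f X x y \<and> chain_reach f X y x}"

lemma basic_sets_eq: "basic_sets f X = chain_class f X ` chain_recurrent f X"
  unfolding basic_sets_def chain_class_def by auto

lemma chain_class_self: "x \<in> chain_recurrent f X \<Longrightarrow> x \<in> chain_class f X x"
  unfolding chain_class_def chain_recurrent_def by auto

lemma chain_class_eq: "y \<in> chain_class f X x \<Longrightarrow> chain_class f X y = chain_class f X x"
  unfolding chain_class_def using chain_reach_trans by blast

lemma terminal_eps_unreachable:
  assumes "B \<in> basic_sets f X" "terminal f X B" "b \<in> B" "C \<in> basic_sets f X" "C \<noteq> B"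
  shows "\<exists>\<epsilon>>0. \<forall>w\<in>C. \<not> eps_chain f X \<epsilon> b w"
proof (rule ccontr)
  assume "\<not> ?thesis"
  then have reach: "\<forall>\<epsilon>>0. \<exists>w\<in>C. eps_chain f X \<epsilon> b w" by blast
  obtain c where c: "c \<in> chain_recurrent f X" "C = chain_class f X c"
    using assms(4) basic_sets_eq by blast
  have "chain_reach f X b c" unfolding chain_reach_def
  proof (intro allI impI)
    fix \<epsilon> :: real assume "\<epsilon> > 0"
    then obtain w where "w \<in> C" "eps_chain f X \<epsilon> b w" using reach by blast
    moreover from \<open>w \<in> C\<close> have "chain_reach f X w c" using c unfolding chain_class_def by blast
    ultimately show "eps_chain f X \<epsilon> b c" using \<open>\<epsilon> > 0\<close> eps_chain_trans
      unfolding chain_reach_def by blast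
  qed
  then have "c \<in> B" using assms(2,3) unfolding terminal_def by blast
  moreover obtain b' where "B = chain_class f X b'" using assms(1) basic_sets_eq by blast
  ultimately have "C = B" using c(2) chain_class_eq by blast
  then show False using assms(5) by blast
qed

lemma terminal_chain_trap:
  assumes "TRAC1 f X" "B \<in> basic_sets f X" "terminal f X B" "b \<in> B"
  shows "\<exists>\<epsilon>>0. \<forall>y\<in>chain_recurrent f X. eps_chain f X \<epsilon> b y \<longrightarrow> y \<in> B"
proof -
  have "eventually (\<lambda>\<epsilon>. \<forall>w\<in>C. \<not> eps_chain f X \<epsilon> b w) (at_right 0)"
    if C: "C \<in> basic_sets f X - {B}" for C
  proof -
    obtain \<epsilon> where "\<epsilon> > 0" "\<forall>w\<in>C. \<not> eps_chain f X \<epsilon> b w"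
      using terminal_eps_unreachable assms(2,3,4) C by blast
    then show ?thesis
      unfolding eventually_at_right_field using eps_chain_mono less_imp_le by blast
  qed
  then have "eventually (\<lambda>\<epsilon>. \<forall>C\<in>basic_sets f X - {B}. \<forall>w\<in>C. \<not> eps_chain f X \<epsilon> b w) (at_right 0)"
    using assms(1) unfolding TRAC1_def by (intro eventually_ball_finite) auto
  then obtain \<delta> :: real where \<delta>: "\<delta> > 0"
      "\<And>\<epsilon>. 0 < \<epsilon> \<Longrightarrow> \<epsilon> < \<delta> \<Longrightarrow> \<forall>C\<in>basic_sets f X - {B}. \<forall>w\<in>C. \<not> eps_chain f X \<epsilon> b w"
    unfolding eventually_at_right_field by auto
  have "y \<in> B" if y: "y \<in> chain_recurrent f X" "eps_chain f X (\<delta> / 2) b y" for y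
  proof (rule ccontr)
    assume "y \<notin> B"
    moreover have "chain_class f X y \<in> basic_sets f X" using y(1) basic_sets_eq by blast
    moreover have "y \<in> chain_class f X y" using y(1) by (rule chain_class_self)
    moreover have "\<forall>C\<in>basic_sets f X - {B}. \<forall>w\<in>C. \<not> eps_chain f X (\<delta> / 2) b w"
      using \<delta> by simp
    ultimately show False using y(2) by blast
  qed
  then show ?thesis using \<delta>(1) by (intro exI[of _ "\<delta> / 2"]) auto
qed

lemma terminal_visible:
  assumes "closed X" "continuous_on X f" "f ` X \<subseteq> X" "TRAC1 f X"
    and "B \<in> basic_sets f X" "terminal f X B"
  shows "visible f X B"
proof -
  obtain b where b: "b \<in> chain_recurrent f X" "B = chain_class f X b"
    using assms(5) basic_sets_eq by blast
  have "b \<in> B" "b \<in> X" using b chain_class_self unfolding chain_recurrent_def by auto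
  then obtain \<epsilon> where \<epsilon>: "\<epsilon> > 0" "\<forall>y\<in>chain_recurrent f X. eps_chain f X \<epsilon> b y \<longrightarrow> y \<in> B"
    using terminal_chain_trap assms(4,5,6) by blast
  define R where "R = {y. eps_chain f X (\<epsilon> / 2) b y}"
  have "x \<in> X \<and> omega_limit f x \<subseteq> B" if x: "x \<in> R" for x
  proof
    show "x \<in> X" using x eps_chain_endpoints unfolding R_def by blast
    show "omega_limit f x \<subseteq> B"
    proof
      fix y assume y: "y \<in> omega_limit f x"
      have "eps_chain f X (\<epsilon> / 2 + \<epsilon> / 2) b y"
        by (rule eps_chain_to_omega_limit[OF assms(1,3)]) (use x y \<epsilon>(1) in \<open>auto simp: R_def\<close>)
      moreover have "y \<in> chain_recurrent f X"
        using omega_limit_subset_chain_recurrent[OF assms(1,2,3) \<open>x \<in> X\<close>] y by blast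
      ultimately show "y \<in> B" using \<epsilon>(2) by simp
    qed
  qed
  then have "R \<subseteq> {x \<in> X. omega_limit f x \<subseteq> B}" by blast
  then have "R \<subseteq> basin f X B"
    unfolding basin_def R_def by (intro interior_of_maximal eps_chain_reachable_openin)
  moreover have "f b \<in> R"
    unfolding R_def using eps_chain_step[of b X f] \<open>b \<in> X\<close> assms(3) \<epsilon>(1) by auto
  ultimately show ?thesis unfolding visible_def by blast
qed

lemma cesaro_mean_eventually_zero:
  fixes a :: "nat \<Rightarrow> real"
  assumes "\<forall>n\<ge>N. a n = 0"
  shows "(\<lambda>n. (\<Sum>i<n. a i) / real n) \<longlonglongrightarrow> 0"
proof -
  have partial_sums: "(\<Sum>i<n. a i) = (\<Sum>i<N. a i)" if "n \<ge> N" for n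
    using that
  proof (induction n rule: dec_induct)
    case (step n)
    then have "a n = 0" using assms by blast
    then show ?case using step.IH by simp
  qed simp
  have "\<forall>\<^sub>F n in sequentially. (\<Sum>i<N. a i) / real n = (\<Sum>i<n. a i) / real n"
    using partial_sums by (intro eventually_sequentiallyI[of N]) metis
  then show ?thesis by (rule Lim_transform_eventually[OF lim_const_over_n])
qed

lemma supp_bump_integral_pos:
  assumes "borel_prob_on X \<mu>" "y \<in> supp X \<mu>" "e > 0"
  shows "integral\<^sup>L \<mu> (\<lambda>z. max 0 (e - dist z y)) > 0"
proof -
  define u where "u = (\<lambda>z. max 0 (e - dist z y))"
  interpret prob_space \<mu> using assms(1) unfolding borel_prob_on_def by blast
  have sp: "space \<mu> = X" "sets \<mu> = sets (restrict_space borel X)"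
    using assms(1) unfolding borel_prob_on_def by auto
  have "continuous_on UNIV u" unfolding u_def by (intro continuous_intros)
  then have "u \<in> borel_measurable (restrict_space borel X)"
    by (intro measurable_restrict_space1 borel_measurable_continuous_onI)
  then have meas: "u \<in> borel_measurable \<mu>" using measurable_cong_sets[OF sp(2) refl] by blast
  have "AE z in \<mu>. norm (u z) \<le> e" using assms(3) by (auto simp: u_def)
  then have int: "integrable \<mu> u" using meas by (rule integrable_const_bound)
  have "integral\<^sup>L \<mu> u \<noteq> 0"
  proof
    assume "integral\<^sup>L \<mu> u = 0"
    then have "AE z in \<mu>. u z = 0"
      using integral_nonneg_eq_0_iff_AE[OF int] by (auto simp: u_def)
    then obtain M where M: "{z \<in> space \<mu>. u z \<noteq> 0} \<subseteq> M" "emeasure \<mu> M = 0" "M \<in> sets \<mu>"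
      by (auto elim: AE_E)
    have "ball y e \<inter> X \<subseteq> M" using M sp(1) by (auto simp: u_def dist_commute)
    then have "emeasure \<mu> (ball y e \<inter> X) = 0" using M emeasure_mono by (metis le_zero_eq)
    then show False using assms(2,3) unfolding supp_def by auto
  qed
  moreover have "integral\<^sup>L \<mu> u \<ge> 0" unfolding u_def by simp
  ultimately have "integral\<^sup>L \<mu> u > 0" by linarith
  then show ?thesis by (simp add: u_def)
qed

lemma supp_subset_omega_limit:
  assumes "borel_prob_on X \<mu>" "x \<in> Gen f X \<mu>"
  shows "supp X \<mu> \<subseteq> omega_limit f x"
proof
  fix y assume y: "y \<in> supp X \<mu>"
  show "y \<in> omega_limit f x"
  proof (rule ccontr)
    assume "y \<notin> omega_limit f x"
    then obtain e N where e: "e > 0" and far: "\<forall>n\<ge>N. dist ((f ^^ n) x) y \<ge> e"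
      unfolding omega_limit_def by (auto simp: not_less)
    define u where "u = (\<lambda>z. max 0 (e - dist z y))"
    have "continuous_on X u" unfolding u_def by (intro continuous_intros)
    then have "(\<lambda>n. (\<Sum>i<n. u ((f ^^ i) x)) / real n) \<longlonglongrightarrow> integral\<^sup>L \<mu> u"
      using assms(2) unfolding Gen_def by blast
    moreover have "(\<lambda>n. (\<Sum>i<n. u ((f ^^ i) x)) / real n) \<longlonglongrightarrow> 0"
      using far unfolding u_def by (intro cesaro_mean_eventually_zero) auto
    ultimately have "integral\<^sup>L \<mu> u = 0" using LIMSEQ_unique by blast
    moreover have "integral\<^sup>L \<mu> u > 0"
      unfolding u_def by (rule supp_bump_integral_pos[OF assms(1) y e])
    ultimately show False by simp
  qed
qed

lemma full_background_dense_conull: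
  assumes "full_background X \<mu>0" "N \<in> null_sets \<mu>0" "openin (top_of_set X) U"
  shows "U \<subseteq> closure (U - N)"
proof
  fix z assume z: "z \<in> U"
  show "z \<in> closure (U - N)"
    unfolding closure_approachable
  proof (intro allI impI)
    fix e :: real assume "e > 0"
    have "openin (top_of_set X) (U \<inter> ball z e)" using assms(3) by (simp add: openin_Int_open)
    moreover have "z \<in> U \<inter> ball z e" using z \<open>e > 0\<close> by simp
    ultimately have "emeasure \<mu>0 (U \<inter> ball z e) > 0"
      using assms(1) unfolding full_background_def by blast
    then have "\<not> U \<inter> ball z e \<subseteq> N"
      using assms(2) emeasure_mono by (metis null_setsD1 null_setsD2 not_le)
    then show "\<exists>x\<in>U - N. dist x z < e" by (auto simp: dist_commute)
  qed
qed

lemma basin_subset_closure_Gen: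
  assumes "full_background X \<mu>0" "TRAC2_with f X \<mu>0 k \<mu>"
  shows "basin f X B \<subseteq>
    closure (basin f X B \<inter> (\<Union>{Gen f X (\<mu> i) | i. i \<in> {1..k} \<and> supp X (\<mu> i) \<subseteq> B}))"
proof -
  obtain N where N: "N \<in> null_sets \<mu>0" "\<forall>x\<in>X - N. \<exists>i\<in>{1..k}. x \<in> Gen f X (\<mu> i)"
    using assms(2) unfolding TRAC2_with_def by blast
  have "x \<in> \<Union>{Gen f X (\<mu> i) | i. i \<in> {1..k} \<and> supp X (\<mu> i) \<subseteq> B}"
    if x: "x \<in> basin f X B - N" for x
  proof -
    have "x \<in> X" "omega_limit f x \<subseteq> B"
      using x interior_of_subset unfolding basin_def by fastforce+
    then obtain i where i: "i \<in> {1..k}" "x \<in> Gen f X (\<mu> i)" using N(2) x by blast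
    then have "borel_prob_on X (\<mu> i)"
      using assms(2) unfolding TRAC2_with_def ergodic_measure_def invariant_measure_def by blast
    then have "supp X (\<mu> i) \<subseteq> B"
      using supp_subset_omega_limit i(2) \<open>omega_limit f x \<subseteq> B\<close> by blast
    then show ?thesis using i by blast
  qed
  then have "basin f X B - N \<subseteq>
      basin f X B \<inter> (\<Union>{Gen f X (\<mu> i) | i. i \<in> {1..k} \<and> supp X (\<mu> i) \<subseteq> B})" by blast
  moreover have "basin f X B \<subseteq> closure (basin f X B - N)"
    using full_background_dense_conull[OF assms(1) N(1)] unfolding basin_def by simp
  ultimately show ?thesis using closure_mono by blast
qed

theorem lemma2p5:
  fixes X :: "'a::metric_space set" and f :: "'a \<Rightarrow> 'a" and \<mu>0 :: "'a measure"
    and k :: nat and \<mu> :: "nat \<Rightarrow> 'a measure"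
  assumes "compact X" and "continuous_on X f" and "f ` X \<subseteq> X"
    and "full_background X \<mu>0"
    and "TRAC1 f X"
    and "TRAC2_with f X \<mu>0 k \<mu>"
  shows "(\<forall>B\<in>basic_sets f X. visible f X B \<longrightarrow>
            (\<exists>i\<in>{1..k}. supp X (\<mu> i) \<subseteq> B) \<and>
            basin f X B \<subseteq> closure (basin f X B \<inter> (\<Union>{Gen f X (\<mu> i) | i. i \<in> {1..k} \<and> supp X (\<mu> i) \<subseteq> B})))
       \<and> (\<forall>B\<in>basic_sets f X. terminal f X B \<longrightarrow> (\<exists>i\<in>{1..k}. supp X (\<mu> i) \<subseteq> B))"
proof -
  note dense = basin_subset_closure_Gen[OF assms(4,6)]
  have supp: "\<exists>i\<in>{1..k}. supp X (\<mu> i) \<subseteq> B" if "visible f X B" for B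
  proof -
    have "basin f X B \<inter> (\<Union>{Gen f X (\<mu> i) | i. i \<in> {1..k} \<and> supp X (\<mu> i) \<subseteq> B}) \<noteq> {}"
      using dense[of B] that unfolding visible_def by auto
    then show ?thesis by blast
  qed
  show ?thesis
    using dense supp terminal_visible[OF compact_imp_closed[OF assms(1)] assms(2,3,5)] by blast
qed

end
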